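(* Let $F(s,r,\boldsymbol t,\bar{\boldsymbol t})$ satisfy the six dispersionless Hirota equations (dH1a)–(dH3b) listed in the context. Then $$\lambda\big(e^{-\partial_sD(\lambda)F}-e^{-\partial_rD(\lambda)F}\big)+\lambda^{-1}\big(e^{\partial_s(\partial_r+\partial_s+D(\lambda))F}-e^{\partial_r(\partial_r+\partial_s+D(\lambda))F}\big)=(\partial_r-\partial_s)\partial_{t_1}F,\quad\text{(dH1c)}$$ $$\lambda^{-1}\big(e^{\partial_s\bar D(\lambda)F}-e^{-\partial_r\bar D(\lambda)F}\big)+\lambda\big(e^{-\partial_s(\partial_r-\partial_s+\bar D(\lambda))F}-e^{\partial_r(\partial_r-\partial_s+\bar D(\lambda))F}\big)=(\partial_r+\partial_s)\partial_{\bar t_1}F,\quad\text{(dH2c)}$$ $$(\partial_r+\partial_s)\partial_{\bar t_1}F=e^{-\partial_r\partial_sF}(\partial_r-\partial_s)\partial_{t_1}F.\quad\text{(dH3c)}$$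
   Context: $F=F(s,r,\boldsymbol t,\bar{\boldsymbol t})$ is a smooth function of continuous variables $s,r$ and $\boldsymbol t=(t_1,t_2,\dots)$, $\bar{\boldsymbol t}=(\bar t_1,\bar t_2,\dots)$. $D(z)=\sum_{n\ge1}\frac{z^{-n}}{n}\partial_{t_n}$, $\bar D(z)=\sum_{n\ge1}\frac{z^n}{n}\partial_{\bar t_n}$; expressions like $\partial_s(\partial_r+D(\lambda))F$ denote derivatives of $F$, and identities are understood as formal series in $\lambda^{-1},\mu^{-1}$ (when $D$ appears) and $\lambda,\mu$ (when $\bar D$ appears), for parameters $\lambda\ne\mu$. The dispersionless Hirota equations are: (dH1a) $e^{D(\lambda)D(\mu)F}=\frac{\lambda e^{-\partial_rD(\lambda)F}-\mu e^{-\partial_rD(\mu)F}}{\lambda-\mu}+\frac1{\lambda\mu}e^{(\partial_s+D(\lambda))(\partial_s+D(\mu))F+\partial_r\partial_sF}$; (dH1b) $e^{D(\lambda)D(\mu)F}=\frac{\lambda e^{-\partial_sD(\lambda)F}-\mu e^{-\partial_sD(\mu)F}}{\lambda-\mu}+\frac1{\lambda\mu}e^{(\partial_r+D(\lambda))(\partial_r+D(\mu))F+\partial_r\partial_sF}$; (dH2a) $e^{\bar D(\lambda)\bar D(\mu)F}=\frac{\lambda^{-1}e^{-\partial_r\bar D(\lambda)F}-\mu^{-1}e^{-\partial_r\bar D(\mu)F}}{\lambda^{-1}-\mu^{-1}}+\lambda\mu\,e^{(-\partial_s+\bar D(\lambda))(-\partial_s+\bar D(\mu))F-\partial_r\partial_sF}$;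 (dH2b) $e^{\bar D(\lambda)\bar D(\mu)F}=\frac{\lambda^{-1}e^{\partial_s\bar D(\lambda)F}-\mu^{-1}e^{\partial_s\bar D(\mu)F}}{\lambda^{-1}-\mu^{-1}}+\lambda\mu\,e^{(\partial_r+\bar D(\lambda))(\partial_r+\bar D(\mu))F-\partial_r\partial_sF}$; (dH3a) $e^{D(\lambda)\bar D(\mu)F}=e^{-(\partial_r+\partial_s)\bar D(\mu)F}-\lambda\mu\,e^{-(\partial_rD(\lambda)+\partial_s\bar D(\mu)+\partial_r\partial_s)F}+\lambda\mu\,e^{(-\partial_s+D(\lambda))(-\partial_s+\bar D(\mu))F-(\partial_r+\partial_s)\partial_sF}$; (dH3b) $e^{D(\lambda)\bar D(\mu)F}=1-\frac{\mu}{\lambda}e^{\partial_s(\partial_s+D(\lambda)-\bar D(\mu))F}+\frac{\mu}{\lambda}e^{(\partial_r+D(\lambda))(\partial_r+\bar D(\mu))F}$. (These arise as the $\hbar\to0$ limit of the difference Fay identities for tau functions of the form $\tau(\hbar^{-1}s,\hbar^{-1}r,\hbar^{-1}\boldsymbol t,\hbar^{-1}\bar{\boldsymbol t})=e^{\hbar^{-2}F+O(\hbar^{-1})}$.) *)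

theory Defs
  imports "HOL-Analysis.Analysis" "HOL-Computational_Algebra.Formal_Power_Series"
begin

text \<open>Coordinates: s, r, t_n (T n), tbar_n (Tb n); only n \<ge> 1 are used by D, Dbar.
  A point is a function coord \<Rightarrow> real; F :: (coord \<Rightarrow> real) \<Rightarrow> real.\<close>
datatype coord = S | R | T nat | Tb nat

definition pd :: "coord \<Rightarrow> ((coord \<Rightarrow> real) \<Rightarrow> real) \<Rightarrow> (coord \<Rightarrow> real) \<Rightarrow> real" where
  "pd c G p = deriv (\<lambda>h. G (p(c := p c + h))) 0"

fun pds :: "coord list \<Rightarrow> ((coord \<Rightarrow> real) \<Rightarrow> real) \<Rightarrow> (coord \<Rightarrow> real) \<Rightarrow> real" where
  "pds [] G = G"
| "pds (c # cs) G = pd c (pds cs G)"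

text \<open>Smoothness: all iterated partial derivatives exist everywhere, and each of them is
  continuous on every finite-dimensional coordinate slice (so F is C^\<infinity> in any finitely
  many of its variables).\<close>
definition smooth :: "((coord \<Rightarrow> real) \<Rightarrow> real) \<Rightarrow> bool" where
  "smooth F \<longleftrightarrow>
     (\<forall>cs c p. (\<lambda>h. pds cs F (p(c := p c + h))) differentiable (at 0)) \<and>
     (\<forall>cs p C. finite C \<longrightarrow> continuous_on {q. \<forall>c. c \<notin> C \<longrightarrow> q c = p c} (pds cs F))"

text \<open>One-variable series.  D(z)G as series in z^{-1}; Dbar(z)G as series in z.\<close>
definition Dser :: "((coord \<Rightarrow> real) \<Rightarrow> real) \<Rightarrow> (coord \<Rightarrow> real) \<Rightarrow> real fps" where
  "Dser G p = Abs_fps (\<lambda>n. if n = 0 then 0 else pd (T n) G p / real n)"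

definition Dbser :: "((coord \<Rightarrow> real) \<Rightarrow> real) \<Rightarrow> (coord \<Rightarrow> real) \<Rightarrow> real fps" where
  "Dbser G p = Abs_fps (\<lambda>n. if n = 0 then 0 else pd (Tb n) G p / real n)"

text \<open>Two-variable series as real fps fps: inner variable = lambda-variable
  (lambda^{-1} for D(lambda), lambda for Dbar(lambda)), outer variable = mu-variable.\<close>
definition DD :: "((coord \<Rightarrow> real) \<Rightarrow> real) \<Rightarrow> (coord \<Rightarrow> real) \<Rightarrow> real fps fps" where
  "DD G p = Abs_fps (\<lambda>m. Abs_fps (\<lambda>n. if n = 0 \<or> m = 0 then 0
      else pd (T n) (pd (T m) G) p / (real n * real m)))"

definition DbDb :: "((coord \<Rightarrow> real) \<Rightarrow> real) \<Rightarrow> (coord \<Rightarrow> real) \<Rightarrow> real fps fps" where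
  "DbDb G p = Abs_fps (\<lambda>m. Abs_fps (\<lambda>n. if n = 0 \<or> m = 0 then 0
      else pd (Tb n) (pd (Tb m) G) p / (real n * real m)))"

definition DDb :: "((coord \<Rightarrow> real) \<Rightarrow> real) \<Rightarrow> (coord \<Rightarrow> real) \<Rightarrow> real fps fps" where
  "DDb G p = Abs_fps (\<lambda>m. Abs_fps (\<lambda>n. if n = 0 \<or> m = 0 then 0
      else pd (T n) (pd (Tb m) G) p / (real n * real m)))"

definition inL :: "real fps \<Rightarrow> real fps fps" where "inL g = fps_const g"
definition inM :: "real fps \<Rightarrow> real fps fps" where "inM g = Abs_fps (\<lambda>m. fps_const (fps_nth g m))"
definition cst :: "real \<Rightarrow> real fps fps" where "cst c = fps_const (fps_const c)"
definition Xv :: "real fps fps" where "Xv = fps_const fps_X"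
definition Yv :: "real fps fps" where "Yv = fps_X"

definition exp1 :: "real fps \<Rightarrow> real fps" where
  "exp1 g = Abs_fps (\<lambda>n. exp (fps_nth g 0) *
      (\<Sum>k\<le>n. fps_nth ((g - fps_const (fps_nth g 0)) ^ k) n / fact k))"

definition exp2 :: "real fps fps \<Rightarrow> real fps fps" where
  "exp2 g = Abs_fps (\<lambda>m. Abs_fps (\<lambda>n. exp (fps_nth (fps_nth g 0) 0) *
      (\<Sum>k\<le>n + m. fps_nth (fps_nth ((g - cst (fps_nth (fps_nth g 0) 0)) ^ k) m) n / fact k)))"

end

theory Submission
  imports Defs
begin

text \<open>
  Proof idea.  The three identities are obtained by reading off low-order coefficients
  of the Hirota equations, viewed as formal series in the two spectral variables.

  (dH1c), (dH2c): the equations (dH1a) and (dH1b) have the same left-hand side, so their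
  right-hand sides agree.  Extracting the coefficient of the first power of the
  \<open>\<mu>\<close>-variable gives an identity of one-variable series in which the terms coming from
  the left-hand exponentials cancel; dividing by the \<open>\<lambda>\<close>-variable yields (dH1c).  The
  same computation applied to (dH2a), (dH2b) gives (dH2c).

  (dH3c): it is the coefficient of \<open>\<lambda>\<^sup>-\<^sup>1\<mu>\<close> in (dH3a).

  Matching the mixed derivatives produced by the series with the ones in the statement
  needs symmetry of second partial derivatives.
\<close>

section \<open>Symmetry of mixed partial derivatives\<close>

lemma pds_has_derivative_on_line:
  assumes sm: "smooth F"
  shows "((\<lambda>x. pds cs F (p(c := p c + x))) has_real_derivative
           pd c (pds cs F) (p(c := p c + x0))) (at x0)"
proof -
  let ?p' = "p(c := p c + x0)"
  have diff: "(\<lambda>h. pds cs F (?p'(c := ?p' c + h))) differentiable (at 0)"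
    using sm unfolding smooth_def by blast
  have shift: "(\<lambda>h. pds cs F (?p'(c := ?p' c + h))) = (\<lambda>h. pds cs F (p(c := p c + (h + x0))))"
    by (auto simp: algebra_simps)
  have "((\<lambda>h. pds cs F (p(c := p c + (h + x0)))) has_real_derivative pd c (pds cs F) ?p') (at 0)"
    using diff unfolding shift pd_def[of c "pds cs F" ?p'] shift
    by (simp add: DERIV_deriv_iff_real_differentiable)
  then show ?thesis
    using DERIV_shift[of "\<lambda>x. pds cs F (p(c := p c + x))" _ 0 x0] by simp
qed

definition plane :: "coord \<Rightarrow> coord \<Rightarrow> (coord \<Rightarrow> real) \<Rightarrow> real \<Rightarrow> real \<Rightarrow> coord \<Rightarrow> real" where
  "plane c1 c2 p x y = p(c1 := p c1 + x, c2 := p c2 + y)"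

lemma pds_has_derivative_plane:
  assumes sm: "smooth F" and ne: "c1 \<noteq> c2"
  shows "((\<lambda>x. pds cs F (plane c1 c2 p x y)) has_real_derivative
            pd c1 (pds cs F) (plane c1 c2 p x0 y)) (at x0)"
    and "((\<lambda>y. pds cs F (plane c1 c2 p x y)) has_real_derivative
            pd c2 (pds cs F) (plane c1 c2 p x y0)) (at y0)"
proof -
  let ?p = "p(c2 := p c2 + y)"
  have "\<And>x. ?p(c1 := ?p c1 + x) = plane c1 c2 p x y"
    using ne by (auto simp: plane_def fun_upd_twist)
  then show "((\<lambda>x. pds cs F (plane c1 c2 p x y)) has_real_derivative
            pd c1 (pds cs F) (plane c1 c2 p x0 y)) (at x0)"
    using pds_has_derivative_on_line[OF sm, of cs ?p c1 x0] by simp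
  show "((\<lambda>y. pds cs F (plane c1 c2 p x y)) has_real_derivative
            pd c2 (pds cs F) (plane c1 c2 p x y0)) (at y0)"
    using pds_has_derivative_on_line[OF sm, of cs "p(c1 := p c1 + x)" c2 y0] ne
    by (simp add: plane_def)
qed

lemma pds_continuous_plane:
  assumes sm: "smooth F"
  shows "isCont (\<lambda>z. pds cs F (plane c1 c2 p (fst z) (snd z))) (0, 0)"
proof -
  let ?Q = "\<lambda>z::real \<times> real. plane c1 c2 p (fst z) (snd z)"
  have cQ: "continuous_on UNIV ?Q"
  proof (rule continuous_on_coordinatewise_then_product)
    fix i
    show "continuous_on UNIV (\<lambda>z. ?Q z i)"
      by (cases "i = c2"; cases "i = c1") (auto simp: plane_def intro!: continuous_intros)
  qed
  have cF: "continuous_on {q. \<forall>c. c \<notin> {c1, c2} \<longrightarrow> q c = p c} (pds cs F)"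
    using sm unfolding smooth_def by blast
  have "continuous_on UNIV (\<lambda>z. pds cs F (?Q z))"
    by (rule continuous_on_compose2[OF cF cQ]) (auto simp: plane_def)
  then show ?thesis by (simp add: continuous_on_eq_continuous_at)
qed

text \<open>Mean value theorem for the mixed second difference on the square \<open>[0,k]\<^sup>2\<close>: computing
  it in either order shows that the two mixed partials agree at two points of the open
  square.\<close>
lemma mixed_partials_agree_nearby:
  assumes sm: "smooth F" and ne: "c1 \<noteq> c2" and k: "k > 0"
  shows "\<exists>a b a' b'. 0 < a \<and> a < k \<and> 0 < b \<and> b < k \<and> 0 < a' \<and> a' < k \<and> 0 < b' \<and> b' < k
     \<and> pd c2 (pd c1 F) (plane c1 c2 p a b) = pd c1 (pd c2 F) (plane c1 c2 p a' b')"
proof -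
  let ?q = "plane c1 c2 p"
  note D1 = pds_has_derivative_plane(1)[OF sm ne] and D2 = pds_has_derivative_plane(2)[OF sm ne]
  have "\<And>x. ((\<lambda>x. F (?q x k) - F (?q x 0)) has_real_derivative
            pd c1 F (?q x k) - pd c1 F (?q x 0)) (at x)"
    using DERIV_diff[OF D1[where cs="[]" and y=k] D1[where cs="[]" and y=0]] by simp
  then obtain a where a: "0 < a" "a < k" "(F (?q k k) - F (?q k 0)) - (F (?q 0 k) - F (?q 0 0))
        = (k - 0) * (pd c1 F (?q a k) - pd c1 F (?q a 0))"
    using MVT2[OF k, of "\<lambda>x. F (?q x k) - F (?q x 0)" "\<lambda>x. pd c1 F (?q x k) - pd c1 F (?q x 0)"]
    by blast
  have "\<And>y. ((\<lambda>y. pd c1 F (?q a y)) has_real_derivative pd c2 (pd c1 F) (?q a y)) (at y)"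
    using D2[where cs="[c1]" and x=a] by simp
  then obtain b where b: "0 < b" "b < k"
      "pd c1 F (?q a k) - pd c1 F (?q a 0) = (k - 0) * pd c2 (pd c1 F) (?q a b)"
    using MVT2[OF k, of "\<lambda>y. pd c1 F (?q a y)" "\<lambda>y. pd c2 (pd c1 F) (?q a y)"] by blast
  have "\<And>y. ((\<lambda>y. F (?q k y) - F (?q 0 y)) has_real_derivative
            pd c2 F (?q k y) - pd c2 F (?q 0 y)) (at y)"
    using DERIV_diff[OF D2[where cs="[]" and x=k] D2[where cs="[]" and x=0]] by simp
  then obtain b' where b': "0 < b'" "b' < k" "(F (?q k k) - F (?q 0 k)) - (F (?q k 0) - F (?q 0 0))
        = (k - 0) * (pd c2 F (?q k b') - pd c2 F (?q 0 b'))"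
    using MVT2[OF k, of "\<lambda>y. F (?q k y) - F (?q 0 y)" "\<lambda>y. pd c2 F (?q k y) - pd c2 F (?q 0 y)"]
    by blast
  have "\<And>x. ((\<lambda>x. pd c2 F (?q x b')) has_real_derivative pd c1 (pd c2 F) (?q x b')) (at x)"
    using D1[where cs="[c2]" and y=b'] by simp
  then obtain a' where a': "0 < a'" "a' < k"
      "pd c2 F (?q k b') - pd c2 F (?q 0 b') = (k - 0) * pd c1 (pd c2 F) (?q a' b')"
    using MVT2[OF k, of "\<lambda>x. pd c2 F (?q x b')" "\<lambda>x. pd c1 (pd c2 F) (?q x b')"] by blast
  have "k * k * pd c2 (pd c1 F) (?q a b) = k * k * pd c1 (pd c2 F) (?q a' b')"
    using a(3) b(3) a'(3) b'(3) by (simp add: algebra_simps)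
  then have "pd c2 (pd c1 F) (?q a b) = pd c1 (pd c2 F) (?q a' b')"
    using k by simp
  then show ?thesis using a(1,2) b(1,2) a'(1,2) b'(1,2) by blast
qed

text \<open>Schwarz's theorem: mixed second partial derivatives of a smooth function commute.
  Letting the square shrink, the two points of the previous lemma tend to \<open>p\<close>.\<close>
lemma pd_commute:
  assumes sm: "smooth F" and ne: "c1 \<noteq> c2"
  shows "pd c1 (pd c2 F) p = pd c2 (pd c1 F) p"
proof -
  define k where "k n = inverse (real (Suc n))" for n
  have "\<forall>n. \<exists>a b a' b'. 0 < a \<and> a < k n \<and> 0 < b \<and> b < k n \<and> 0 < a' \<and> a' < k n \<and> 0 < b' \<and> b' < k n
     \<and> pd c2 (pd c1 F) (plane c1 c2 p a b) = pd c1 (pd c2 F) (plane c1 c2 p a' b')"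
    using mixed_partials_agree_nearby[OF sm ne] by (simp add: k_def)
  then obtain A B A' B' where AB: "\<And>n. 0 < A n \<and> A n < k n \<and> 0 < B n \<and> B n < k n
      \<and> 0 < A' n \<and> A' n < k n \<and> 0 < B' n \<and> B' n < k n"
    and eq: "\<And>n. pd c2 (pd c1 F) (plane c1 c2 p (A n) (B n))
               = pd c1 (pd c2 F) (plane c1 c2 p (A' n) (B' n))"
    by metis
  have k0: "k \<longlonglongrightarrow> 0" unfolding k_def by (rule LIMSEQ_inverse_real_of_nat)
  have squeeze: "X \<longlonglongrightarrow> 0" if "\<And>n. 0 < X n \<and> X n < k n" for X :: "nat \<Rightarrow> real"
    by (rule tendsto_sandwich[OF _ _ tendsto_const k0])
      (use that in \<open>auto intro!: always_eventually less_imp_le\<close>)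
  have lim: "(\<lambda>n. pds cs F (plane c1 c2 p (X n) (Y n))) \<longlonglongrightarrow> pds cs F p"
    if "X \<longlonglongrightarrow> 0" "Y \<longlonglongrightarrow> 0" for X Y cs
  proof -
    have "(\<lambda>n. (X n, Y n)) \<longlonglongrightarrow> (0, 0)" using that by (intro tendsto_intros)
    from isCont_tendsto_compose[OF pds_continuous_plane[OF sm, of cs c1 c2 p] this]
    show ?thesis by (simp add: plane_def)
  qed
  have "(\<lambda>n. pd c2 (pd c1 F) (plane c1 c2 p (A n) (B n))) \<longlonglongrightarrow> pd c2 (pd c1 F) p"
    using lim[of A B "[c2, c1]"] squeeze AB by simp
  moreover have "(\<lambda>n. pd c2 (pd c1 F) (plane c1 c2 p (A n) (B n))) \<longlonglongrightarrow> pd c1 (pd c2 F) p"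
    unfolding eq using lim[of A' B' "[c1, c2]"] squeeze AB by simp
  ultimately show ?thesis using LIMSEQ_unique by metis
qed

notation fps_nth (infixl "$$" 75)

lemma exp1_nth0 [simp]: "exp1 g $$ 0 = exp (g $$ 0)"
  by (simp add: exp1_def)

lemma exp1_nth1 [simp]: "exp1 g $$ Suc 0 = exp (g $$ 0) * g $$ 1"
  by (simp add: exp1_def)

lemma exp2_nth0 [simp]: "exp2 g $$ 0 = exp1 (g $$ 0)"
  by (simp add: exp2_def exp1_def cst_def fps_eq_iff fps_power_zeroth)

lemma exp2_nth10 [simp]: "exp2 g $$ Suc 0 $$ 0 = exp (g $$ 0 $$ 0) * g $$ 1 $$ 0"
  by (simp add: exp2_def cst_def)

lemma Yv_mult_nth [simp]: "(Yv * f) $$ 0 = 0" "(Yv * f) $$ Suc n = f $$ n"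
  by (simp_all add: Yv_def)

lemma Xv_mult_nth [simp]: "(Xv * f) $$ n = fps_X * f $$ n"
  by (simp add: Xv_def)

lemma inL_nth [simp]: "(inL g * f) $$ n = g * f $$ n" "inL g $$ n = (if n = 0 then g else 0)"
  by (simp_all add: inL_def)

lemma inM_nth [simp]: "inM g $$ n = fps_const (g $$ n)"
  by (simp add: inM_def)

lemma cst_nth [simp]: "cst c $$ n = (if n = 0 then fps_const c else 0)"
  by (simp add: cst_def)

lemma Xv_nth [simp]: "Xv $$ n = (if n = 0 then fps_X else 0)"
  by (simp add: Xv_def)

lemma Yv_nth [simp]: "Yv $$ n = (if n = 1 then 1 else 0)"
  by (simp add: Yv_def fps_X_def)

lemma Dser_nth [simp]: "Dser G p $$ n = (if n = 0 then 0 else pd (T n) G p / real n)"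
  by (simp add: Dser_def)

lemma Dbser_nth [simp]: "Dbser G p $$ n = (if n = 0 then 0 else pd (Tb n) G p / real n)"
  by (simp add: Dbser_def)

lemma second_derivative_series_nth0 [simp]:
  "DD G p $$ 0 = 0" "DbDb G p $$ 0 = 0" "DDb G p $$ 0 = 0" "DDb G p $$ n $$ 0 = 0"
  by (simp_all add: DD_def DbDb_def DDb_def fps_eq_iff)

lemma fay_pair_first_coefficient:
  fixes a1 a2 :: "real fps" and E1 E2 :: "real fps fps"
  assumes "Yv * inL a1 - Xv * inM a1 + (Yv - Xv) * Xv * Yv * E1 =
           Yv * inL a2 - Xv * inM a2 + (Yv - Xv) * Xv * Yv * E2"
  shows "(a2 - a1) / fps_X + fps_X * (E1 $$ 0 - E2 $$ 0) = fps_const (a2 $$ 1 - a1 $$ 1)"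
proof -
  from arg_cong[OF assms, of "\<lambda>f. f $$ 1"]
  have "a1 - fps_X * fps_const (a1 $$ 1) - fps_X * fps_X * E1 $$ 0
      = a2 - fps_X * fps_const (a2 $$ 1) - fps_X * fps_X * E2 $$ 0"
    by (simp add: algebra_simps)
  then have "a2 - a1 = fps_X * (fps_const (a2 $$ 1 - a1 $$ 1) - fps_X * (E1 $$ 0 - E2 $$ 0))"
    by (simp add: algebra_simps flip: fps_const_sub)
  then have "(a2 - a1) / fps_X = fps_const (a2 $$ 1 - a1 $$ 1) - fps_X * (E1 $$ 0 - E2 $$ 0)"
    by (metis fps_X_neq_zero nonzero_mult_div_cancel_left)
  then show ?thesis by simp
qed

lemma dH1c:
  assumes sm: "smooth F"
  and dH1a: "exp2 (DD F p) * (Yv - Xv) =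
      Yv * inL (exp1 (- Dser (pd R F) p)) - Xv * inM (exp1 (- Dser (pd R F) p))
    + (Yv - Xv) * Xv * Yv * exp2 (cst (pd S (pd S F) p) + inM (Dser (pd S F) p)
        + inL (Dser (pd S F) p) + DD F p + cst (pd R (pd S F) p))"
  and dH1b: "exp2 (DD F p) * (Yv - Xv) =
      Yv * inL (exp1 (- Dser (pd S F) p)) - Xv * inM (exp1 (- Dser (pd S F) p))
    + (Yv - Xv) * Xv * Yv * exp2 (cst (pd R (pd R F) p) + inM (Dser (pd R F) p)
        + inL (Dser (pd R F) p) + DD F p + cst (pd R (pd S F) p))"
  shows "(exp1 (- Dser (pd S F) p) - exp1 (- Dser (pd R F) p)) / fps_X
          + fps_X * (exp1 (fps_const (pd S (pd R F) p + pd S (pd S F) p) + Dser (pd S F) p)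
                   - exp1 (fps_const (pd R (pd R F) p + pd R (pd S F) p) + Dser (pd R F) p))
          = fps_const (pd R (pd (T 1) F) p - pd S (pd (T 1) F) p)"
proof -
  have "pd S (pd R F) p = pd R (pd S F) p" "pd R (pd (T 1) F) p = pd (T 1) (pd R F) p"
       "pd S (pd (T 1) F) p = pd (T 1) (pd S F) p"
    by (simp_all add: pd_commute[OF sm])
  with fay_pair_first_coefficient[OF trans[OF dH1a[symmetric] dH1b]]
  show ?thesis by (simp add: algebra_simps flip: fps_const_add)
qed

lemma dH2c:
  assumes sm: "smooth F"
  and dH2a: "exp2 (DbDb F p) * (Yv - Xv) =
      Yv * inL (exp1 (- Dbser (pd R F) p)) - Xv * inM (exp1 (- Dbser (pd R F) p))
    + (Yv - Xv) * Xv * Yv * exp2 (cst (pd S (pd S F) p) - inM (Dbser (pd S F) p)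
        - inL (Dbser (pd S F) p) + DbDb F p - cst (pd R (pd S F) p))"
  and dH2b: "exp2 (DbDb F p) * (Yv - Xv) =
      Yv * inL (exp1 (Dbser (pd S F) p)) - Xv * inM (exp1 (Dbser (pd S F) p))
    + (Yv - Xv) * Xv * Yv * exp2 (cst (pd R (pd R F) p) + inM (Dbser (pd R F) p)
        + inL (Dbser (pd R F) p) + DbDb F p - cst (pd R (pd S F) p))"
  shows "(exp1 (Dbser (pd S F) p) - exp1 (- Dbser (pd R F) p)) / fps_X
          + fps_X * (exp1 (fps_const (- pd S (pd R F) p + pd S (pd S F) p) - Dbser (pd S F) p)
                   - exp1 (fps_const (pd R (pd R F) p - pd R (pd S F) p) + Dbser (pd R F) p))
          = fps_const (pd R (pd (Tb 1) F) p + pd S (pd (Tb 1) F) p)"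
proof -
  have "pd S (pd R F) p = pd R (pd S F) p" "pd R (pd (Tb 1) F) p = pd (Tb 1) (pd R F) p"
       "pd S (pd (Tb 1) F) p = pd (Tb 1) (pd S F) p"
    by (simp_all add: pd_commute[OF sm])
  with fay_pair_first_coefficient[OF trans[OF dH2a[symmetric] dH2b]]
  show ?thesis by (simp add: algebra_simps flip: fps_const_add fps_const_sub)
qed

text \<open>(dH3c) is the coefficient of \<open>\<lambda>\<^sup>-\<^sup>1\<mu>\<close> in (dH3a); the left-hand side contributes nothing.\<close>
lemma dH3c:
  assumes sm: "smooth F"
  and dH3a: "Xv * exp2 (DDb F p) =
      Xv * inM (exp1 (- Dbser (pd R F) p - Dbser (pd S F) p))
    - Yv * exp2 (- inL (Dser (pd R F) p) - inM (Dbser (pd S F) p) - cst (pd R (pd S F) p))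
    + Yv * exp2 (cst (pd S (pd S F) p) - inM (Dbser (pd S F) p) - inL (Dser (pd S F) p)
        + DDb F p - cst (pd R (pd S F) p + pd S (pd S F) p))"
  shows "pd R (pd (Tb 1) F) p + pd S (pd (Tb 1) F) p
          = exp (- pd R (pd S F) p) * (pd R (pd (T 1) F) p - pd S (pd (T 1) F) p)"
proof -
  have "pd R (pd (T 1) F) p = pd (T 1) (pd R F) p" "pd S (pd (T 1) F) p = pd (T 1) (pd S F) p"
       "pd R (pd (Tb 1) F) p = pd (Tb 1) (pd R F) p" "pd S (pd (Tb 1) F) p = pd (Tb 1) (pd S F) p"
    by (simp_all add: pd_commute[OF sm])
  with arg_cong[OF dH3a, of "\<lambda>f. f $$ 1 $$ 1"]
  show ?thesis by (simp add: algebra_simps)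
qed

theorem theorem6:
  fixes F :: "(coord \<Rightarrow> real) \<Rightarrow> real"
  assumes sm: "smooth F"
  and dH1a: "\<forall>p. exp2 (DD F p) * (Yv - Xv) =
      Yv * inL (exp1 (- Dser (pd R F) p)) - Xv * inM (exp1 (- Dser (pd R F) p))
    + (Yv - Xv) * Xv * Yv * exp2 (cst (pd S (pd S F) p) + inM (Dser (pd S F) p)
        + inL (Dser (pd S F) p) + DD F p + cst (pd R (pd S F) p))"
  and dH1b: "\<forall>p. exp2 (DD F p) * (Yv - Xv) =
      Yv * inL (exp1 (- Dser (pd S F) p)) - Xv * inM (exp1 (- Dser (pd S F) p))
    + (Yv - Xv) * Xv * Yv * exp2 (cst (pd R (pd R F) p) + inM (Dser (pd R F) p)
        + inL (Dser (pd R F) p) + DD F p + cst (pd R (pd S F) p))"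
  and dH2a: "\<forall>p. exp2 (DbDb F p) * (Yv - Xv) =
      Yv * inL (exp1 (- Dbser (pd R F) p)) - Xv * inM (exp1 (- Dbser (pd R F) p))
    + (Yv - Xv) * Xv * Yv * exp2 (cst (pd S (pd S F) p) - inM (Dbser (pd S F) p)
        - inL (Dbser (pd S F) p) + DbDb F p - cst (pd R (pd S F) p))"
  and dH2b: "\<forall>p. exp2 (DbDb F p) * (Yv - Xv) =
      Yv * inL (exp1 (Dbser (pd S F) p)) - Xv * inM (exp1 (Dbser (pd S F) p))
    + (Yv - Xv) * Xv * Yv * exp2 (cst (pd R (pd R F) p) + inM (Dbser (pd R F) p)
        + inL (Dbser (pd R F) p) + DbDb F p - cst (pd R (pd S F) p))"
  and dH3a: "\<forall>p. Xv * exp2 (DDb F p) =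
      Xv * inM (exp1 (- Dbser (pd R F) p - Dbser (pd S F) p))
    - Yv * exp2 (- inL (Dser (pd R F) p) - inM (Dbser (pd S F) p) - cst (pd R (pd S F) p))
    + Yv * exp2 (cst (pd S (pd S F) p) - inM (Dbser (pd S F) p) - inL (Dser (pd S F) p)
        + DDb F p - cst (pd R (pd S F) p + pd S (pd S F) p))"
  and dH3b: "\<forall>p. exp2 (DDb F p) =
      1 - Xv * Yv * exp2 (cst (pd S (pd S F) p) + inL (Dser (pd S F) p) - inM (Dbser (pd S F) p))
    + Xv * Yv * exp2 (cst (pd R (pd R F) p) + inM (Dbser (pd R F) p)
        + inL (Dser (pd R F) p) + DDb F p)"
  shows "(\<forall>p. (exp1 (- Dser (pd S F) p) - exp1 (- Dser (pd R F) p)) / fps_X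
          + fps_X * (exp1 (fps_const (pd S (pd R F) p + pd S (pd S F) p) + Dser (pd S F) p)
                   - exp1 (fps_const (pd R (pd R F) p + pd R (pd S F) p) + Dser (pd R F) p))
          = fps_const (pd R (pd (T 1) F) p - pd S (pd (T 1) F) p))
    \<and> (\<forall>p. (exp1 (Dbser (pd S F) p) - exp1 (- Dbser (pd R F) p)) / fps_X
          + fps_X * (exp1 (fps_const (- pd S (pd R F) p + pd S (pd S F) p) - Dbser (pd S F) p)
                   - exp1 (fps_const (pd R (pd R F) p - pd R (pd S F) p) + Dbser (pd R F) p))
          = fps_const (pd R (pd (Tb 1) F) p + pd S (pd (Tb 1) F) p))
    \<and> (\<forall>p. pd R (pd (Tb 1) F) p + pd S (pd (Tb 1) F) p
          = exp (- pd R (pd S F) p) * (pd R (pd (T 1) F) p - pd S (pd (T 1) F) p))"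
  using dH1c[OF sm dH1a[rule_format] dH1b[rule_format]]
        dH2c[OF sm dH2a[rule_format] dH2b[rule_format]]
        dH3c[OF sm dH3a[rule_format]]
  by blast

end
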